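(* Let $x\in(0,1)$ and let $n$ be an integer with $n\ge n_0(x)$. Then \[ \frac{x^{2n}}{(1-x)^{2n+2}}\cdot\frac{(n!)^2}{((2n)!)^2}\le \max_{|z|=x}|R_n(z)|< \frac{2x^{2n}}{(1-x)^{2n+2}}\cdot\frac{(n!)^2}{((2n)!)^2}. \]
   Context: For $n\ge1$ let $y_n(z)=\sum_{k=0}^{n}\frac{(n+k)!}{(n-k)!\,k!}\left(\frac{z}{2}\right)^k$ be the $n$-th Bessel polynomial and let $\alpha_{n1},\dots,\alpha_{nn}$ be its zeros (they are simple). Put $a_{nk}=1-\alpha_{nk}/2$ and $b_{nk}=1+\alpha_{nk}/2$ for $k=1,\dots,n$. Define the rational function \[ R_n(z)=\frac{1}{(z-1)^2}-\sum_{k=1}^n\frac{a_{nk}}{1-a_{nk}z}+\sum_{k=1}^n\frac{b_{nk}}{1-b_{nk}z} \] (so that $zR_n(z)=zg'(z)-\sum_k(g(a_{nk}z)-g(b_{nk}z))$ for $g(z)=z/(1-z)$). For $x\in(0,1)$ put $n_0(x)=\max\{14,\;x^2(1-x)^{-2}\}-1$. *)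

theory Defs
  imports "HOL-Analysis.Analysis" "HOL-Computational_Algebra.Polynomial"
begin

definition bessel_poly :: "nat \<Rightarrow> complex poly" where
  "bessel_poly n = (\<Sum>k\<le>n. monom (of_real (fact (n + k) / (fact (n - k) * fact k * 2 ^ k))) k)"

text \<open>The set of zeros of y_n (they are simple, so summing over this set is summing over
  alpha_{n1},...,alpha_{nn}).\<close>
definition bessel_zeros :: "nat \<Rightarrow> complex set" where
  "bessel_zeros n = {z. poly (bessel_poly n) z = 0}"

definition R :: "nat \<Rightarrow> complex \<Rightarrow> complex" where
  "R n z = 1 / (z - 1)^2
     - (\<Sum>\<alpha>\<in>bessel_zeros n. (1 - \<alpha>/2) / (1 - (1 - \<alpha>/2) * z))
     + (\<Sum>\<alpha>\<in>bessel_zeros n. (1 + \<alpha>/2) / (1 - (1 + \<alpha>/2) * z))"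

definition n0 :: "real \<Rightarrow> real" where
  "n0 x = max 14 (x^2 / (1 - x)^2) - 1"

end

theory Submission
  imports Defs "HOL-Computational_Algebra.Fundamental_Theorem_Algebra"
begin

text \<open>
  The Bessel polynomial \<open>y = y\<^sub>n\<close> solves \<open>w\<^sup>2 y'' + (2w + 2) y' = n(n+1) y\<close>. Hence
  \<open>2 y(w) y(-w) + w\<^sup>2 (y'(w) y(-w) + y(w) y'(-w))\<close> is constant, equal to 2; in particular
  the zeros of \<open>y\<close> are simple. Substituting \<open>w = 2(z - 1)/z\<close> turns the two sums in
  \<open>R\<^sub>n(z)\<close> into logarithmic derivatives of \<open>y\<close> at \<open>\<plusminus>w\<close>, and the invariant collapses
  everything to \<open>R\<^sub>n(z) = 1 / ((z - 1)\<^sup>2 P(w))\<close> with \<open>P(w) = y(w) y(-w)\<close>.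

  \<open>P\<close> is even, and the third-order equation satisfied by a product of two solutions gives a
  two-term recursion for its coefficients whose ratios exceed \<open>n\<close>. So once
  \<open>|w|\<^sup>2 (n + 1) \<ge> 4\<close> and \<open>n \<ge> 13\<close>, the top coefficient \<open>c\<close> dominates geometrically:
  \<open>|P(w)| \<ge> 12/19 |c| |w|\<^sup>2\<^sup>n\<close>, while for real \<open>w\<close> the sum alternates and
  \<open>|P(w)| \<le> |c| w\<^sup>2\<^sup>n\<close>. On \<open>|z| = x\<close> we have \<open>|z - 1| \<ge> 1 - x\<close> and
  \<open>|w| \<ge> 2(1 - x)/x\<close>, with equality at \<open>z = x\<close>; this gives the bound \<open>19/12\<close> times the
  main term everywhere and at least the main term at \<open>z = x\<close>.
\<close>

section \<open>The Bessel differential equation\<close>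

lemma coeff_X_mult_pderiv:
  fixes p :: "'a::idom poly"
  shows "coeff ([:0,1:] * pderiv p) k = of_nat k * coeff p k"
  by (cases k) (simp_all add: coeff_pderiv)

lemma coeff_X2_mult_pderiv2:
  fixes p :: "'a::idom poly"
  shows "coeff ([:0,1:]^2 * pderiv (pderiv p)) k = of_nat k * (of_nat k - 1) * coeff p k"
  by (cases k rule: nat.exhaust[case_product nat.exhaust, of _ "k - 1"])
     (simp_all add: power2_eq_square coeff_pderiv ring_distribs)

lemma coeff_X3_mult_pderiv3:
  fixes p :: "'a::idom poly"
  shows "coeff ([:0,1:]^3 * pderiv (pderiv (pderiv p))) k
     = of_nat k * (of_nat k - 1) * (of_nat k - 2) * coeff p k"
proof -
  consider "k = 0" | "k = 1" | "k = 2" | j where "k = Suc (Suc (Suc j))"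
    by (metis One_nat_def Suc_1 not0_implies_Suc)
  then show ?thesis
    by cases (simp_all add: power3_eq_cube coeff_pderiv ring_distribs numeral_2_eq_2)
qed

definition bessel_ode :: "'a::idom poly \<Rightarrow> 'a \<Rightarrow> bool" where
  "bessel_ode p L \<longleftrightarrow> [:0,1:]^2 * pderiv (pderiv p) + [:2,2:] * pderiv p = smult L p"

lemma coeff_bessel_ode_lhs:
  fixes p :: "'a::idom poly"
  shows "coeff ([:0,1:]^2 * pderiv (pderiv p) + [:2,2:] * pderiv p) k
     = of_nat k * (of_nat k + 1) * coeff p k + 2 * of_nat (Suc k) * coeff p (Suc k)"
proof -
  have "[:2,2:] * pderiv p = smult 2 (pderiv p) + smult 2 ([:0,1:] * pderiv p)"
    by simp
  then show ?thesis
    by (simp only: coeff_add coeff_smult coeff_X2_mult_pderiv2 coeff_X_mult_pderiv coeff_pderiv)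
       (simp add: algebra_simps)
qed

lemma poly_bessel_ode:
  assumes "bessel_ode p L"
  shows "w^2 * poly (pderiv (pderiv p)) w + (2*w + 2) * poly (pderiv p) w = L * poly p w"
  using arg_cong[OF assms[unfolded bessel_ode_def], of "\<lambda>q. poly q w"]
  by (simp add: algebra_simps power2_eq_square)

lemma poly_pderiv_bessel_ode:
  assumes "bessel_ode p L"
  shows "w^2 * poly (pderiv (pderiv (pderiv p))) w + (4*w + 2) * poly (pderiv (pderiv p)) w
           + 2 * poly (pderiv p) w = L * poly (pderiv p) w"
  using arg_cong[OF assms[unfolded bessel_ode_def], of "\<lambda>q. poly (pderiv q) w"]
  by (simp add: pderiv_mult pderiv_add pderiv_pCons pderiv_smult algebra_simps power2_eq_square)

lemma poly_pderiv_pcompose_neg: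
  fixes p :: "'a::idom poly"
  shows "poly (pcompose p [:0,-1:]) w = poly p (-w)"
    and "poly (pderiv (pcompose p [:0,-1:])) w = - poly (pderiv p) (-w)"
    and "poly (pderiv (pderiv (pcompose p [:0,-1:]))) w = poly (pderiv (pderiv p)) (-w)"
    and "poly (pderiv (pderiv (pderiv (pcompose p [:0,-1:])))) w
           = - poly (pderiv (pderiv (pderiv p))) (-w)"
  by (simp_all add: poly_pcompose pderiv_pcompose pderiv_pCons pderiv_mult pderiv_minus)

lemma bessel_ode_invariant:
  fixes p :: "'a::{idom,ring_char_0} poly"
  assumes ode: "bessel_ode p L"
  shows "2 * poly p w * poly p (-w)
           + w^2 * (poly (pderiv p) w * poly p (-w) + poly p w * poly (pderiv p) (-w))
         = 2 * poly p 0 ^ 2"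
proof -
  define q where "q = pcompose p [:0,-1:]"
  define H where "H = smult 2 (p * q) + [:0,1:]^2 * (pderiv p * q - p * pderiv q)"
  have "poly (pderiv H) v = 0" for v
  proof -
    have "poly (pderiv H) v
        = 2 * (poly (pderiv p) v * poly p (-v) - poly p v * poly (pderiv p) (-v))
          + 2 * v * (poly (pderiv p) v * poly p (-v) + poly p v * poly (pderiv p) (-v))
          + v^2 * (poly (pderiv (pderiv p)) v * poly p (-v)
                   - poly p v * poly (pderiv (pderiv p)) (-v))"
      unfolding H_def q_def
      by (simp add: pderiv_mult pderiv_add pderiv_diff pderiv_smult pderiv_power pderiv_pCons
          poly_pderiv_pcompose_neg algebra_simps power2_eq_square)
    with poly_bessel_ode[OF ode, of v] poly_bessel_ode[OF ode, of "-v"] show ?thesis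
      by algebra
  qed
  then have "pderiv H = 0"
    using poly_eq_poly_eq_iff[of "pderiv H" 0] by auto
  then have "poly H w = poly H 0"
    by (simp add: pderiv_eq_0_iff poly_altdef)
  then show ?thesis
    unfolding H_def q_def by (simp add: poly_pderiv_pcompose_neg algebra_simps power2_eq_square)
qed

lemma product_bessel_ode:
  fixes p :: "'a::{idom,ring_char_0} poly"
  assumes ode: "bessel_ode p L"
  defines "P \<equiv> p * pcompose p [:0,-1:]"
  shows "[:0,1:] * ([:0,1:]^3 * pderiv (pderiv (pderiv P)) + smult 6 ([:0,1:]^2 * pderiv (pderiv P))
           + smult (6 - 4 * L) ([:0,1:] * pderiv P) - smult (4 * L) P) = smult 4 (pderiv P)"
proof -
  have "poly ([:0,1:] * ([:0,1:]^3 * pderiv (pderiv (pderiv P))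
                 + smult 6 ([:0,1:]^2 * pderiv (pderiv P))
                 + smult (6 - 4 * L) ([:0,1:] * pderiv P) - smult (4 * L) P)) v
        = poly (smult 4 (pderiv P)) v" for v
    using poly_bessel_ode[OF ode, of v] poly_bessel_ode[OF ode, of "-v"]
      poly_pderiv_bessel_ode[OF ode, of v] poly_pderiv_bessel_ode[OF ode, of "-v"]
    unfolding P_def
    by (simp add: pderiv_mult pderiv_add poly_pderiv_pcompose_neg power2_eq_square power3_eq_cube)
       algebra
  then show ?thesis
    using poly_eq_poly_eq_iff by blast
qed

lemma coeff_product_bessel_ode:
  fixes p :: "'a::{idom,ring_char_0} poly"
  assumes ode: "bessel_ode p L"
  defines "P \<equiv> p * pcompose p [:0,-1:]"
  shows "coeff P 1 = 0"
    and "4 * of_nat (k + 2) * coeff P (k + 2)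
           = of_nat (k + 1) * (of_nat k * (of_nat k + 2) - 4 * L) * coeff P k"
proof -
  note eq = product_bessel_ode[OF ode, folded P_def]
  show "coeff P 1 = 0"
    using arg_cong[OF eq, of "\<lambda>q. coeff q 0"] by (simp add: coeff_pderiv)
  show "4 * of_nat (k + 2) * coeff P (k + 2)
          = of_nat (k + 1) * (of_nat k * (of_nat k + 2) - 4 * L) * coeff P k"
  proof -
    have "coeff ([:0,1:] * q) (Suc k) = coeff q k" for q :: "'a poly" by simp
    from this arg_cong[OF eq, of "\<lambda>q. coeff q (Suc k)"] show ?thesis
      by (simp only: coeff_add coeff_diff coeff_smult coeff_pderiv
          coeff_X3_mult_pderiv3 coeff_X2_mult_pderiv2 coeff_X_mult_pderiv)
         (simp add: algebra_simps)
  qed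
qed

section \<open>Bessel polynomials\<close>

definition bessel_coeff :: "nat \<Rightarrow> nat \<Rightarrow> real" where
  "bessel_coeff n k = fact (n + k) / (fact (n - k) * fact k * 2 ^ k)"

lemma coeff_bessel_poly:
  "coeff (bessel_poly n) k = (if k \<le> n then complex_of_real (bessel_coeff n k) else 0)"
  unfolding bessel_poly_def bessel_coeff_def by (simp add: coeff_sum coeff_monom)

lemma bessel_coeff_pos: "k \<le> n \<Longrightarrow> bessel_coeff n k > 0"
  unfolding bessel_coeff_def by simp

lemma bessel_coeff_Suc:
  assumes "k < n"
  shows "2 * (real k + 1) * bessel_coeff n (Suc k)
           = (real n * (real n + 1) - real k * (real k + 1)) * bessel_coeff n k"
proof -
  obtain m where n: "n = Suc (k + m)" using assms less_imp_Suc_add by blast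
  have "n + Suc k = Suc (n + k)" "n - k = Suc m" "n - Suc k = m" using n by auto
  moreover have "real n * (real n + 1) - real k * (real k + 1) = (real m + 1) * real (Suc (n + k))"
    using n by (simp add: algebra_simps)
  ultimately show ?thesis
    unfolding bessel_coeff_def fact_Suc of_nat_mult power_Suc
    by (simp add: divide_simps del: of_nat_Suc) (simp add: algebra_simps)
qed

lemma degree_bessel_poly: "degree (bessel_poly n) = n"
proof (rule antisym)
  show "degree (bessel_poly n) \<le> n" by (rule degree_le) (simp add: coeff_bessel_poly)
  show "n \<le> degree (bessel_poly n)"
    by (rule le_degree) (simp add: coeff_bessel_poly bessel_coeff_pos less_imp_neq[symmetric])
qed

lemma poly_bessel_poly_0: "poly (bessel_poly n) 0 = 1"
  by (simp add: poly_0_coeff_0 coeff_bessel_poly bessel_coeff_def)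

lemma bessel_ode_bessel_poly: "bessel_ode (bessel_poly n) (of_nat (n * (n + 1)))"
  unfolding bessel_ode_def
proof (rule poly_eqI)
  fix k
  have "2 * of_nat (Suc k) * coeff (bessel_poly n) (Suc k)
          = (of_nat (n * (n + 1)) - of_nat k * (of_nat k + 1)) * coeff (bessel_poly n) k"
  proof (cases "k < n")
    case True
    then show ?thesis
      using arg_cong[OF bessel_coeff_Suc[OF True], of complex_of_real]
      by (simp add: coeff_bessel_poly algebra_simps)
  next
    case False
    then show ?thesis by (cases "k = n") (simp_all add: coeff_bessel_poly algebra_simps)
  qed
  then show "coeff ([:0,1:]^2 * pderiv (pderiv (bessel_poly n))
                    + [:2,2:] * pderiv (bessel_poly n)) k
      = coeff (smult (of_nat (n * (n + 1))) (bessel_poly n)) k"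
    unfolding coeff_bessel_ode_lhs by (simp add: algebra_simps)
qed

lemma bessel_poly_invariant:
  "2 * poly (bessel_poly n) w * poly (bessel_poly n) (-w)
     + w^2 * (poly (pderiv (bessel_poly n)) w * poly (bessel_poly n) (-w)
              + poly (bessel_poly n) w * poly (pderiv (bessel_poly n)) (-w)) = 2"
  using bessel_ode_invariant[OF bessel_ode_bessel_poly] by (simp add: poly_bessel_poly_0)

lemma rsquarefree_bessel_poly: "rsquarefree (bessel_poly n)"
  unfolding rsquarefree_roots
proof (intro allI notI)
  fix a
  assume "poly (bessel_poly n) a = 0 \<and> poly (pderiv (bessel_poly n)) a = 0"
  with bessel_poly_invariant[of n a] show False by simp
qed

section \<open>A closed form for R\<close>

lemma rsquarefree_sum_roots_inverse:
  fixes p :: "complex poly"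
  assumes "rsquarefree p" and "poly p u \<noteq> 0"
  shows "(\<Sum>\<alpha> | poly p \<alpha> = 0. 1 / (u - \<alpha>)) = poly (pderiv p) u / poly p u"
proof -
  define Z where "Z = {\<alpha>. poly p \<alpha> = 0}"
  have "p \<noteq> 0" using assms(1) by (simp add: rsquarefree_def)
  then have fin: "finite Z" unfolding Z_def by (rule poly_roots_finite)
  have uZ: "u \<notin> Z" using assms(2) unfolding Z_def by simp
  have decomp: "smult (lead_coeff p) (\<Prod>z\<in>Z. [:-z, 1:]) = p"
    unfolding Z_def by (rule complex_poly_decompose_rsquarefree[OF assms(1)])
  have "poly p u = lead_coeff p * (\<Prod>z\<in>Z. u - z)"
    by (subst decomp[symmetric]) (simp add: poly_prod)
  moreover have "poly (pderiv p) u = lead_coeff p * (\<Sum>a\<in>Z. \<Prod>z\<in>Z-{a}. u - z)"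
    by (subst decomp[symmetric])
       (simp add: pderiv_smult pderiv_prod pderiv_pCons poly_sum poly_prod)
  moreover have "(\<Prod>z\<in>Z-{a}. u - z) = (\<Prod>z\<in>Z. u - z) / (u - a)" if "a \<in> Z" for a
    using prod.remove[OF fin that, of "(-) u"] that uZ by (auto simp: eq_divide_eq)
  moreover have "(\<Prod>z\<in>Z. u - z) \<noteq> 0" using uZ fin by auto
  ultimately show ?thesis
    using assms(2) by (simp add: sum_divide_distrib Z_def[symmetric])
qed

lemma R_summand_eq:
  fixes z w \<alpha> :: complex
  assumes z: "z \<noteq> 0" and w: "w = 2 * (z - 1) / z" and "\<alpha> \<noteq> w" and "\<alpha> \<noteq> -w"
  shows "(1 + \<alpha>/2) / (1 - (1 + \<alpha>/2) * z) - (1 - \<alpha>/2) / (1 - (1 - \<alpha>/2) * z)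
           = 2 / z^2 * (1 / (w - \<alpha>) + 1 / (-w - \<alpha>))"
proof -
  have wz: "w * z = 2 * z - 2" using z unfolding w by simp
  have den: "1 - (1 - \<alpha>/2) * z = z/2 * (\<alpha> - w)" "1 - (1 + \<alpha>/2) * z = - z/2 * (\<alpha> + w)"
    by (simp_all add: field_simps wz)
  have num: "1 - \<alpha>/2 = (2/z - (\<alpha> - w)) / 2" "1 + \<alpha>/2 = (2/z + (\<alpha> + w)) / 2"
    using z by (simp_all add: field_simps wz)
  have nz: "\<alpha> - w \<noteq> 0" "\<alpha> + w \<noteq> 0" using assms(3,4) by (auto simp: add_eq_0_iff)
  have frac: "(2/z - a) / 2 / (z/2 * a) = 2 / z^2 / a - 1/z"
    "(2/z + a) / 2 / (- z/2 * a) = - 2 / z^2 / a - 1/z" if "a \<noteq> 0" for a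
    using that z by (simp_all add: field_simps power2_eq_square)
  have neg: "w - \<alpha> = - (\<alpha> - w)" "-w - \<alpha> = - (\<alpha> + w)" by simp_all
  show ?thesis
    unfolding den unfolding num frac[OF nz(1)] frac[OF nz(2)] neg divide_minus_right
    by (simp add: divide_divide_eq_left' algebra_simps)
qed

definition bessel_product :: "nat \<Rightarrow> complex poly" where
  "bessel_product n = bessel_poly n * pcompose (bessel_poly n) [:0,-1:]"

lemma poly_bessel_product:
  "poly (bessel_product n) w = poly (bessel_poly n) w * poly (bessel_poly n) (-w)"
  by (simp add: bessel_product_def poly_pcompose)

lemma R_eq_bessel_product:
  fixes z w :: complex
  assumes z: "z \<noteq> 0" "z \<noteq> 1" and w: "w = 2 * (z - 1) / z"
    and P: "poly (bessel_product n) w \<noteq> 0"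
  shows "R n z = 1 / ((z - 1)^2 * poly (bessel_product n) w)"
proof -
  define y where "y = bessel_poly n"
  define A B where "A = poly y w" and "B = poly y (-w)"
  have A: "A \<noteq> 0" and B: "B \<noteq> 0"
    using P unfolding A_def B_def y_def poly_bessel_product by auto
  have Z: "bessel_zeros n = {\<alpha>. poly y \<alpha> = 0}" unfolding y_def bessel_zeros_def ..
  have "\<alpha> \<noteq> w \<and> \<alpha> \<noteq> -w" if "\<alpha> \<in> bessel_zeros n" for \<alpha>
    using that A B unfolding Z A_def B_def by auto
  then have "R n z = 1/(z-1)^2 + (\<Sum>\<alpha> | poly y \<alpha> = 0. 2/z^2 * (1/(w - \<alpha>) + 1/(-w - \<alpha>)))"
    unfolding R_def diff_conv_add_uminus sum_negf[symmetric] add.assoc sum.distrib[symmetric]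
    by (auto simp: Z R_summand_eq[OF z(1) w] intro!: sum.cong)
  also have "\<dots> = 1/(z-1)^2 + 2/z^2 * (poly (pderiv y) w / A + poly (pderiv y) (-w) / B)"
  proof -
    have "(\<Sum>\<alpha> | poly y \<alpha> = 0. 1 / (u - \<alpha>)) = poly (pderiv y) u / poly y u"
      if "poly y u \<noteq> 0" for u
      using rsquarefree_sum_roots_inverse[OF rsquarefree_bessel_poly that[unfolded y_def]]
      unfolding y_def .
    from this[of w] this[of "-w"] show ?thesis
      using A B unfolding A_def B_def sum_distrib_left[symmetric] sum.distrib by simp
  qed
  also have "\<dots> = 1 / ((z - 1)^2 * (A * B))"
  proof -
    define S where "S = poly (pderiv y) w * B + A * poly (pderiv y) (-w)"
    have "w^2 * S = 2 - 2 * A * B"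
      using bessel_poly_invariant[of n w] unfolding S_def y_def A_def B_def
      by (simp add: algebra_simps)
    moreover have "w^2 * z^2 = 4 * (z - 1)^2"
      using z unfolding w by (simp add: field_simps power2_eq_square)
    ultimately have "S * (4 * (z - 1)^2) = (2 - 2 * A * B) * z^2"
      by (metis mult.commute mult.left_commute)
    then have S_eq: "S = (2 - 2 * A * B) * z^2 / (4 * (z - 1)^2)" using z by (simp add: field_simps)
    have sum_eq: "poly (pderiv y) w / A + poly (pderiv y) (-w) / B = S / (A * B)"
      using A B unfolding S_def by (simp add: field_simps)
    show ?thesis unfolding sum_eq S_eq using z A B by (simp add: field_simps)
  qed
  finally show ?thesis unfolding A_def B_def y_def poly_bessel_product .
qed

section \<open>The coefficients of y(w) y(-w)\<close>

lemma degree_bessel_product: "degree (bessel_product n) = 2 * n"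
proof -
  have "poly (bessel_poly n) 0 = 1" "poly (pcompose (bessel_poly n) [:0,-1:]) 0 = 1"
    by (simp_all add: poly_pcompose poly_bessel_poly_0)
  then have "bessel_poly n \<noteq> 0" "pcompose (bessel_poly n) [:0,-1:] \<noteq> 0" by auto
  then show ?thesis
    by (simp add: bessel_product_def degree_mult_eq degree_pcompose degree_bessel_poly)
qed

lemma coeff_bessel_product_top:
  "coeff (bessel_product n) (2 * n) = (-1)^n * complex_of_real (bessel_coeff n n ^ 2)"
  using coeff_mult_degree_sum[of "bessel_poly n" "pcompose (bessel_poly n) [:0,-1:]"]
  by (simp add: bessel_product_def degree_pcompose degree_bessel_poly coeff_pcompose_linear
      coeff_bessel_poly mult_2 power2_eq_square)

lemma coeff_bessel_product_rec:
  "coeff (bessel_product n) 1 = 0"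
  "4 * of_nat (k + 2) * coeff (bessel_product n) (k + 2)
     = of_nat (k + 1) * (of_nat k * (of_nat k + 2) - 4 * of_nat (n * (n + 1)))
       * coeff (bessel_product n) k"
  using coeff_product_bessel_ode[OF bessel_ode_bessel_poly] unfolding bessel_product_def by blast+

definition bessel_product_ratio :: "nat \<Rightarrow> nat \<Rightarrow> real" where
  "bessel_product_ratio n j = (2 * j + 1) * (real n - j) * (n + j + 1) / (2 * (j + 1))"

definition bessel_product_coeff :: "nat \<Rightarrow> nat \<Rightarrow> real" where
  "bessel_product_coeff n j = (-1)^j * (\<Prod>i<j. bessel_product_ratio n i)"

lemma coeff_bessel_product_even:
  "coeff (bessel_product n) (2 * j) = complex_of_real (bessel_product_coeff n j)"
proof (induction j)
  case 0
  then show ?case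
    by (simp add: bessel_product_coeff_def poly_0_coeff_0[symmetric] poly_bessel_product
        poly_bessel_poly_0)
next
  case (Suc j)
  have "4 * (2 * real j + 2) * bessel_product_coeff n (Suc j)
          = (2 * real j + 1) * (2 * real j * (2 * real j + 2) - 4 * (real n * (real n + 1)))
            * bessel_product_coeff n j"
    by (simp add: bessel_product_coeff_def bessel_product_ratio_def field_simps)
  from arg_cong[OF this, of complex_of_real]
  have "4 * of_nat (2 * j + 2) * complex_of_real (bessel_product_coeff n (Suc j))
       = 4 * of_nat (2 * j + 2) * coeff (bessel_product n) (2 * j + 2)"
    unfolding coeff_bessel_product_rec(2)[of "2 * j" n] Suc.IH by (simp add: algebra_simps)
  moreover have "(4 * of_nat (2 * j + 2) :: complex) \<noteq> 0"
    by (simp only: of_nat_eq_0_iff mult_eq_0_iff) simp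
  ultimately have "coeff (bessel_product n) (2 * j + 2)
                     = complex_of_real (bessel_product_coeff n (Suc j))"
    by (metis mult_left_cancel)
  then show ?case by (simp add: add.commute)
qed

lemma coeff_bessel_product_odd: "coeff (bessel_product n) (Suc (2 * j)) = 0"
proof (induction j)
  case 0
  then show ?case using coeff_bessel_product_rec(1) by simp
next
  case (Suc j)
  have "4 * of_nat (2 * j + 3) * coeff (bessel_product n) (2 * j + 3) = 0"
    using coeff_bessel_product_rec(2)[of "2 * j + 1" n] Suc.IH by (simp add: numeral_3_eq_3)
  moreover have "(4 * of_nat (2 * j + 3) :: complex) \<noteq> 0"
    by (simp only: of_nat_eq_0_iff mult_eq_0_iff) simp
  ultimately show ?case by (simp add: numeral_3_eq_3)
qed

lemma sum_lessThan_double: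
  fixes f :: "nat \<Rightarrow> 'a::comm_monoid_add"
  shows "(\<Sum>i<2 * m. f i) = (\<Sum>j<m. f (2 * j) + f (2 * j + 1))"
  by (induction m) (simp_all add: mult_2 add.assoc)

lemma poly_bessel_product_eq_sum:
  "poly (bessel_product n) w
     = (\<Sum>j\<le>n. complex_of_real (bessel_product_coeff n j) * w^(2 * j))"
proof -
  have "poly (bessel_product n) w = (\<Sum>i<2 * Suc n. coeff (bessel_product n) i * w^i)"
    unfolding poly_altdef degree_bessel_product
    by (simp add: lessThan_Suc_atMost[symmetric] coeff_eq_0 degree_bessel_product)
  also have "\<dots> = (\<Sum>j\<le>n. complex_of_real (bessel_product_coeff n j) * w^(2 * j))"
    unfolding sum_lessThan_double lessThan_Suc_atMost
    by (simp add: coeff_bessel_product_even coeff_bessel_product_odd)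
  finally show ?thesis .
qed

lemma bessel_product_coeff_top: "bessel_product_coeff n n = (-1)^n * bessel_coeff n n ^ 2"
proof -
  have "complex_of_real (bessel_product_coeff n n) = complex_of_real ((-1)^n * bessel_coeff n n ^ 2)"
    using coeff_bessel_product_even[of n n] coeff_bessel_product_top[of n] by simp
  then show ?thesis by (simp only: of_real_eq_iff)
qed

lemma abs_bessel_product_coeff_top: "\<bar>bessel_product_coeff n n\<bar> = bessel_coeff n n ^ 2"
  by (simp add: bessel_product_coeff_top abs_mult)

lemma bessel_product_coeff_Suc:
  "bessel_product_coeff n (Suc j) = - bessel_product_ratio n j * bessel_product_coeff n j"
  by (simp add: bessel_product_coeff_def)

lemma bessel_product_ratio_ge:
  assumes "j < n"
  shows "real n \<le> bessel_product_ratio n j"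
proof -
  define J D where "J = real j" and "D = real n - real j"
  have J: "J \<ge> 0" and D: "D \<ge> 1" using assms unfolding J_def D_def by auto
  have "D * (2*J + 1) \<le> D * D * (2*J + 1)" "4*J*J + 4*J \<le> D * (4*J*J + 4*J)"
    using mult_right_mono[OF D, of "D * (2*J + 1)"] mult_right_mono[OF D, of "4*J*J + 4*J"] J D
    by simp_all
  moreover have "(2*J + 1) * D * (2*J + 1 + D) - 2 * (J + D) * (J + 1)
      = (D * D * (2*J + 1) - D * (2*J + 1)) + (D * (4*J*J + 4*J) - (4*J*J + 4*J)) + 2 * J * (J + 1)"
    by (simp add: algebra_simps)
  ultimately have "2 * (J + D) * (J + 1) \<le> (2*J + 1) * D * (2*J + 1 + D)"
    using J by (smt (verit) mult_nonneg_nonneg)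
  moreover have "bessel_product_ratio n j = (2*J + 1) * D * (2*J + 1 + D) / (2 * (J + 1))"
    unfolding bessel_product_ratio_def J_def D_def by (simp add: algebra_simps)
  ultimately show ?thesis
    using J by (simp add: le_divide_eq J_def D_def algebra_simps)
qed

lemma bessel_product_coeff_sign:
  assumes "j \<le> n"
  shows "bessel_product_coeff n j = (-1)^j * \<bar>bessel_product_coeff n j\<bar>"
proof -
  have "0 \<le> bessel_product_ratio n i" if "i < j" for i
    using bessel_product_ratio_ge[of i n] that assms by simp
  then have "(\<Prod>i<j. bessel_product_ratio n i) \<ge> 0" by (auto intro!: prod_nonneg)
  then show ?thesis by (simp add: bessel_product_coeff_def abs_mult power_abs)
qed

section \<open>Dominance of the leading term\<close>

lemma sum_lessThan_le_of_ratio: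
  fixes t :: "nat \<Rightarrow> real"
  assumes "0 \<le> q" and "\<And>j. 0 \<le> t j" and "\<And>j. j < m \<Longrightarrow> t j \<le> q * t (Suc j)"
  shows "(1 - q) * (\<Sum>j<m. t j) \<le> q * t m"
  using assms(3)
proof (induction m)
  case 0
  then show ?case using assms(1,2) by simp
next
  case (Suc m)
  then have "(1 - q) * (\<Sum>j<Suc m. t j) \<le> q * t m + (1 - q) * t m"
    by (simp add: algebra_simps)
  also have "\<dots> \<le> q * t (Suc m)" using Suc.prems[of m] by (simp add: algebra_simps)
  finally show ?case .
qed

lemma alternating_sum_le_last:
  fixes t :: "nat \<Rightarrow> real"
  assumes "\<And>j. 0 \<le> t j" and "\<And>j. j < m \<Longrightarrow> t j \<le> t (Suc j)"
  shows "\<bar>\<Sum>j\<le>m. (-1)^j * t j\<bar> \<le> t m"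
proof -
  have "0 \<le> (-1)^k * (\<Sum>j\<le>k. (-1)^j * t j) \<and> (-1)^k * (\<Sum>j\<le>k. (-1)^j * t j) \<le> t k"
    if "k \<le> m" for k
    using that
  proof (induction k)
    case 0
    then show ?case using assms(1) by simp
  next
    case (Suc k)
    have "(-1)^Suc k * (\<Sum>j\<le>Suc k. (-1)^j * t j) = t (Suc k) - (-1)^k * (\<Sum>j\<le>k. (-1)^j * t j)"
      by (simp add: algebra_simps)
    then show ?case using Suc assms(2)[of k] by simp
  qed
  moreover have "\<bar>\<Sum>j\<le>m. (-1)^j * t j\<bar> = \<bar>(-1)^m * (\<Sum>j\<le>m. (-1)^j * t j)\<bar>"
    by (simp add: abs_mult power_abs)
  ultimately show ?thesis by fastforce
qed

lemma bessel_product_term_ratio: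
  assumes "13 \<le> n" and "0 \<le> W" and "4 \<le> W * (real n + 1)" and "j < n"
  shows "\<bar>bessel_product_coeff n j\<bar> * W^j
           \<le> 7/26 * (\<bar>bessel_product_coeff n (Suc j)\<bar> * W^Suc j)"
proof -
  define t where "t = \<bar>bessel_product_coeff n j\<bar> * W^j"
  have ratio: "real n \<le> bessel_product_ratio n j" by (rule bessel_product_ratio_ge[OF assms(4)])
  have "26 * (real n + 1) \<le> 7 * real n * 4" using assms(1) by simp
  also have "\<dots> \<le> 7 * real n * (W * (real n + 1))" using assms(3) by (intro mult_left_mono) auto
  finally have "26 * (real n + 1) \<le> (7 * real n * W) * (real n + 1)" by (simp only: mult.assoc)
  then have "26 \<le> 7 * real n * W"
    using mult_le_cancel_right_pos[of "real n + 1" 26 "7 * real n * W"] by linarith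
  also have "\<dots> \<le> 7 * bessel_product_ratio n j * W"
    using ratio assms(2) by (simp add: mult_right_mono)
  finally have "26 * t \<le> 7 * (bessel_product_ratio n j * W * t)"
    using assms(2) unfolding t_def mult.assoc[symmetric] by (intro mult_right_mono) auto
  moreover have "\<bar>bessel_product_coeff n (Suc j)\<bar> * W^Suc j = bessel_product_ratio n j * W * t"
    using ratio unfolding t_def bessel_product_coeff_Suc by (simp add: abs_mult)
  ultimately show ?thesis unfolding t_def[symmetric] by linarith
qed

text \<open>The lower-order terms add up to at most \<open>(7/26) / (1 - 7/26) = 7/19\<close> of the top one.\<close>

lemma norm_poly_bessel_product_ge:
  assumes n: "13 \<le> n" and w: "4 \<le> norm w ^ 2 * (real n + 1)"
  shows "12/19 * (bessel_coeff n n ^ 2 * norm w ^ (2 * n)) \<le> norm (poly (bessel_product n) w)"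
proof -
  define a where "a j = complex_of_real (bessel_product_coeff n j) * w^(2 * j)" for j
  define t where "t j = \<bar>bessel_product_coeff n j\<bar> * (norm w ^ 2)^j" for j
  have norm_a: "norm (a j) = t j" for j
    by (simp add: a_def t_def norm_mult norm_power power_mult)
  have "(1 - 7/26) * (\<Sum>j<n. t j) \<le> 7/26 * t n"
    using bessel_product_term_ratio[OF n _ w] unfolding t_def
    by (intro sum_lessThan_le_of_ratio) auto
  moreover have "norm (\<Sum>j<n. a j) \<le> (\<Sum>j<n. t j)"
    using norm_sum[of a "{..<n}"] by (simp only: norm_a)
  moreover have "poly (bessel_product n) w = (\<Sum>j<n. a j) + a n"
    by (simp add: poly_bessel_product_eq_sum a_def lessThan_Suc_atMost[symmetric])
  then have "t n - norm (\<Sum>j<n. a j) \<le> norm (poly (bessel_product n) w)"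
    using norm_triangle_ineq4[of "poly (bessel_product n) w" "\<Sum>j<n. a j"] by (simp add: norm_a)
  ultimately show ?thesis
    by (simp add: t_def abs_bessel_product_coeff_top power_mult)
qed

lemma norm_poly_bessel_product_real_le:
  assumes n: "13 \<le> n" and r: "4 \<le> r^2 * (real n + 1)"
  shows "norm (poly (bessel_product n) (complex_of_real r)) \<le> bessel_coeff n n ^ 2 * r^(2 * n)"
proof -
  define t where "t j = \<bar>bessel_product_coeff n j\<bar> * (r^2)^j" for j
  have "poly (bessel_product n) (complex_of_real r)
          = complex_of_real (\<Sum>j\<le>n. bessel_product_coeff n j * (r^2)^j)"
    unfolding poly_bessel_product_eq_sum by (simp add: power_mult)
  also have "(\<Sum>j\<le>n. bessel_product_coeff n j * (r^2)^j) = (\<Sum>j\<le>n. (-1)^j * t j)"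
    using bessel_product_coeff_sign unfolding t_def by (intro sum.cong) (auto simp: mult.assoc)
  finally have "poly (bessel_product n) (complex_of_real r)
                  = complex_of_real (\<Sum>j\<le>n. (-1)^j * t j)" .
  moreover have "\<bar>\<Sum>j\<le>n. (-1)^j * t j\<bar> \<le> t n"
  proof (rule alternating_sum_le_last)
    fix j assume "j < n"
    with bessel_product_term_ratio[OF n _ r] have "t j \<le> 7/26 * t (Suc j)"
      unfolding t_def by simp
    moreover have "0 \<le> t (Suc j)" unfolding t_def by simp
    ultimately show "t j \<le> t (Suc j)" by linarith
  qed (simp add: t_def)
  ultimately have "norm (poly (bessel_product n) (complex_of_real r)) \<le> t n"
    by (simp only: norm_of_real)
  then show ?thesis by (simp add: t_def abs_bessel_product_coeff_top power_mult)
qed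

section \<open>Estimates on the circle\<close>

lemma bessel_coeff_scaled_eq:
  fixes x :: real
  assumes "0 < x" and "x < 1"
  shows "(1 - x)^2 * (bessel_coeff n n ^ 2 * (2 * (1 - x) / x)^(2 * n))
           = 1 / (x^(2*n) / (1 - x)^(2*n+2) * (fact n)^2 / (fact (2*n))^2)"
proof -
  define y where "y = 1 - x"
  have y: "0 < y" using assms(2) unfolding y_def by simp
  have "bessel_coeff n n = fact (2 * n) / (fact n * 2^n)"
    by (simp add: bessel_coeff_def mult_2)
  moreover have "(2 * y / x)^n = 2^n * (y / x)^n"
    by (metis power_mult_distrib times_divide_eq_right)
  ultimately have "bessel_coeff n n * (2 * y / x)^n = fact (2 * n) / fact n * (y / x)^n"
    by simp
  from arg_cong[OF this, of "\<lambda>t. t^2"]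
  have "bessel_coeff n n ^ 2 * (2 * y / x)^(2 * n) = (fact (2 * n) / fact n)^2 * (y / x)^(2 * n)"
    unfolding power_mult_distrib by (simp only: power_mult[symmetric] mult.commute)
  then show ?thesis
    using assms(1) y unfolding y_def[symmetric]
    by (simp add: power_add power_divide field_simps power2_eq_square)
qed

lemma norm_bessel_argument_ge:
  fixes z :: complex
  assumes "0 < x" "x < 1" "norm z = x"
  shows "2 * (1 - x) / x \<le> norm (2 * (z - 1) / z)"
proof -
  have "1 - x \<le> norm (z - 1)"
    using norm_triangle_ineq2[of 1 z] assms(3) by (simp add: norm_minus_commute)
  moreover have "norm (2 * (z - 1) / z) = 2 * norm (z - 1) / x"
    using assms(3) by (simp only: norm_divide norm_mult) simp
  ultimately show ?thesis
    using assms(1) by (simp add: divide_right_mono)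
qed

lemma bessel_argument_large:
  fixes w :: "'a::real_normed_field"
  assumes "0 < x" "x < 1" "2 * (1 - x) / x \<le> norm w" "x^2 / (1 - x)^2 \<le> real n + 1"
  shows "4 \<le> norm w ^ 2 * (real n + 1)"
proof -
  define y where "y = 1 - x"
  have y: "0 < y" using assms(2) unfolding y_def by simp
  have "4 = (2 * y / x)^2 * (x^2 / y^2)"
    using assms(1) y by (simp add: power_divide power_mult_distrib)
  also have "\<dots> \<le> norm w ^ 2 * (real n + 1)"
    using assms y unfolding y_def[symmetric] by (intro mult_mono power_mono) auto
  finally show ?thesis .
qed

lemma norm_R_le:
  fixes x :: real and z :: complex
  assumes x: "0 < x" "x < 1" and z: "norm z = x"
    and n: "13 \<le> n" "x^2 / (1 - x)^2 \<le> real n + 1"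
  shows "norm (R n z) \<le> 19/12 * (x^(2*n) / (1 - x)^(2*n+2) * (fact n)^2 / (fact (2*n))^2)"
proof -
  define w where "w = 2 * (z - 1) / z"
  define C where "C = bessel_coeff n n ^ 2 * (2 * (1 - x) / x)^(2 * n)"
  have w: "2 * (1 - x) / x \<le> norm w"
    unfolding w_def by (rule norm_bessel_argument_ge[OF x z])
  have "12/19 * C \<le> 12/19 * (bessel_coeff n n ^ 2 * norm w ^ (2 * n))"
    unfolding C_def using w x by (intro mult_left_mono power_mono) auto
  also have "\<dots> \<le> norm (poly (bessel_product n) w)"
    by (rule norm_poly_bessel_product_ge[OF n(1) bessel_argument_large[OF x w n(2)]])
  finally have P: "12/19 * C \<le> norm (poly (bessel_product n) w)" .
  have C: "0 < C" unfolding C_def using x bessel_coeff_pos[of n n] by simp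
  have z1: "1 - x \<le> norm (z - 1)"
    using norm_triangle_ineq2[of 1 z] z by (simp add: norm_minus_commute)
  have "z \<noteq> 0" "z \<noteq> 1" "poly (bessel_product n) w \<noteq> 0" using x z P C by auto
  from R_eq_bessel_product[OF this(1,2) w_def this(3)]
  have "norm (R n z) = 1 / (norm (z - 1)^2 * norm (poly (bessel_product n) w))"
    by (simp add: norm_divide norm_mult norm_power)
  also have "\<dots> \<le> 1 / ((1 - x)^2 * (12/19 * C))"
    using P C z1 x by (intro divide_left_mono mult_mono mult_pos_pos power_mono) auto
  also have "\<dots> = 19/12 / ((1 - x)^2 * C)" by simp
  also have "\<dots> = 19/12 * (x^(2*n) / (1 - x)^(2*n+2) * (fact n)^2 / (fact (2*n))^2)"
    using bessel_coeff_scaled_eq[OF x, of n, folded C_def] by simp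
  finally show ?thesis .
qed

lemma norm_R_real_ge:
  fixes x :: real
  assumes x: "0 < x" "x < 1" and n: "13 \<le> n" "x^2 / (1 - x)^2 \<le> real n + 1"
  shows "x^(2*n) / (1 - x)^(2*n+2) * (fact n)^2 / (fact (2*n))^2
           \<le> norm (R n (complex_of_real x))"
proof -
  define r where "r = 2 * (x - 1) / x"
  define C where "C = bessel_coeff n n ^ 2 * (2 * (1 - x) / x)^(2 * n)"
  define p where "p = poly (bessel_product n) (complex_of_real r)"
  have r: "norm r = 2 * (1 - x) / x" and "r^2 = (2 * (1 - x) / x)^2"
    using x unfolding r_def by (simp_all add: power2_eq_square field_simps)
  then have r2: "r^(2 * n) = (2 * (1 - x) / x)^(2 * n)" by (simp only: power_mult)
  have large: "4 \<le> norm (complex_of_real r) ^ 2 * (real n + 1)"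
    by (rule bessel_argument_large[OF x _ n(2)]) (use r in simp)
  have C: "0 < C" unfolding C_def using x bessel_coeff_pos[of n n] by simp
  have "12/19 * C \<le> norm p"
    using norm_poly_bessel_product_ge[OF n(1) large] r unfolding C_def p_def by simp
  then have p: "0 < norm p" using C by linarith
  have "norm p \<le> C"
    using norm_poly_bessel_product_real_le[OF n(1), of r] large unfolding C_def p_def r2 by simp
  then have "1 / ((1 - x)^2 * C) \<le> 1 / ((1 - x)^2 * norm p)"
    using p x C by (intro divide_left_mono mult_left_mono mult_pos_pos) auto
  moreover have "norm (complex_of_real x - 1) = 1 - x"
  proof -
    have "complex_of_real x - 1 = complex_of_real (x - 1)" by simp
    then show ?thesis using x by (simp only: norm_of_real)
  qed
  then have "norm (R n (complex_of_real x)) = 1 / ((1 - x)^2 * norm p)"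
    using p x unfolding p_def
    by (subst R_eq_bessel_product[where w = "complex_of_real r"])
       (auto simp: r_def norm_divide norm_mult norm_power)
  ultimately show ?thesis
    using bessel_coeff_scaled_eq[OF x, of n, folded C_def] by simp
qed

theorem proposition3:
  fixes x :: real and n :: nat
  assumes "0 < x" and "x < 1" and "n \<ge> 1" and "real n \<ge> n0 x"
  shows "x^(2*n) / (1 - x)^(2*n+2) * (fact n)^2 / (fact (2*n))^2
           \<le> (SUP z\<in>sphere (0::complex) x. norm (R n z))
    \<and> (SUP z\<in>sphere (0::complex) x. norm (R n z))
           < 2 * x^(2*n) / (1 - x)^(2*n+2) * (fact n)^2 / (fact (2*n))^2"
proof -
  define K where "K = x^(2*n) / (1 - x)^(2*n+2) * (fact n)^2 / (fact (2*n))^2"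
  have n: "13 \<le> n" "x^2 / (1 - x)^2 \<le> real n + 1"
    using assms(4) unfolding n0_def by linarith+
  have upper: "norm (R n z) \<le> 19/12 * K" if "z \<in> sphere 0 x" for z
    using norm_R_le[OF assms(1,2) _ n] that unfolding K_def by simp
  have x: "complex_of_real x \<in> sphere 0 x" using assms(1) by simp
  have "K \<le> norm (R n (complex_of_real x))"
    using norm_R_real_ge[OF assms(1,2) n] unfolding K_def .
  also have "\<dots> \<le> (SUP z\<in>sphere 0 x. norm (R n z))"
    using upper by (intro cSUP_upper[OF x] bdd_aboveI2[where M = "19/12 * K"]) auto
  finally have "K \<le> (SUP z\<in>sphere 0 x. norm (R n z))" .
  moreover have "(SUP z\<in>sphere 0 x. norm (R n z)) \<le> 19/12 * K"
    using upper assms(1) by (intro cSUP_least) auto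
  moreover have "0 < K" unfolding K_def using assms(1,2) by simp
  moreover have twoK: "2 * x^(2*n) / (1 - x)^(2*n+2) * (fact n)^2 / (fact (2*n))^2 = 2 * K"
    unfolding K_def by simp
  ultimately show ?thesis unfolding K_def[symmetric] twoK by linarith
qed

end
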